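(* Let $G$ be an abelian Hausdorff topological group and let $A$ be an infinite absolutely Cauchy summable subset of $G$ such that the cyclic subgroup $\langle a\rangle$ is discrete (in the subspace topology) for every $a\in A$. Then $A$ contains an infinite topologically independent subset.
   Context: $A\subseteq G$ is absolutely Cauchy summable if for every neighbourhood $U$ of $0$ there is a finite $F\subseteq A$ such that the subgroup $\langle A\setminus F\rangle$ generated by $A\setminus F$ is contained in $U$. A subset $B\subseteq G$ is topologically independent if $0\notin B$ and for every neighbourhood $W$ of $0$ there is a neighbourhood $U$ of $0$ such that for every finite $F\subseteq B$ and all integers $\{z_a:a\in F\}$, $\sum_{a\in F}z_aa\in U$ implies $z_aa\in W$ for all $a\in F$. *)

theory Defs
  imports Complex_Main
begin

definition zmult :: "int \<Rightarrow> 'a::group_add \<Rightarrow> 'a" where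
  "zmult z a = (if 0 \<le> z then ((plus a) ^^ nat z) 0 else - (((plus a) ^^ nat (- z)) 0))"

definition add_subgroup :: "'a::group_add set \<Rightarrow> bool" where
  "add_subgroup H \<longleftrightarrow> 0 \<in> H \<and> (\<forall>x\<in>H. \<forall>y\<in>H. x - y \<in> H)"

definition gen_subgroup :: "'a::group_add set \<Rightarrow> 'a set" where
  "gen_subgroup S = \<Inter>{H. add_subgroup H \<and> S \<subseteq> H}"

definition nhd0 :: "'a::{zero,topological_space} set \<Rightarrow> bool" where
  "nhd0 U \<longleftrightarrow> (\<exists>V. open V \<and> 0 \<in> V \<and> V \<subseteq> U)"

definition abs_cauchy_summable :: "'a::{group_add,topological_space} set \<Rightarrow> bool" where
  "abs_cauchy_summable A \<longleftrightarrow>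
     (\<forall>U. nhd0 U \<longrightarrow> (\<exists>F. finite F \<and> F \<subseteq> A \<and> gen_subgroup (A - F) \<subseteq> U))"

definition top_independent :: "'a::{ab_group_add,topological_space} set \<Rightarrow> bool" where
  "top_independent B \<longleftrightarrow> 0 \<notin> B \<and>
     (\<forall>W. nhd0 W \<longrightarrow> (\<exists>U. nhd0 U \<and>
        (\<forall>F z. finite F \<and> F \<subseteq> B \<longrightarrow>
           (\<Sum>a\<in>F. zmult (z a) a) \<in> U \<longrightarrow> (\<forall>a\<in>F. zmult (z a) a \<in> W))))"

definition discrete_subspace :: "'a::topological_space set \<Rightarrow> bool" where
  "discrete_subspace S \<longleftrightarrow> (\<forall>x\<in>S. \<exists>V. open V \<and> V \<inter> S = {x})"

end

theory Submission
  imports Defs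
begin

text \<open>For every a \<in> A - {0} choose a neighbourhood Q_a of 0 whose differences meet \<langle>a\<rangle> only in 0
  (possible because \<langle>a\<rangle> is discrete) and, by summability, a finite F_a \<subseteq> A with
  \<langle>A - F_a\<rangle> \<subseteq> Q_a. Pick distinct b_0, b_1, ... in A - {0} such that b_n \<notin> F_(b_k) for k < n.
  If a finite sum \<Sum> t_i with t_i \<in> \<langle>b_i\<rangle> lies in Q_(b_0) \<inter> ... \<inter> Q_(b_(m-1)), then, inductively,
  t_k and the sum differ by the tail \<Sum>_(i>k) t_i \<in> \<langle>A - F_(b_k)\<rangle> \<subseteq> Q_(b_k), which forces t_k = 0
  for all k < m; the remaining terms lie in any prescribed neighbourhood by summability.\<close>

lemma add_subgroup_gen_subgroup: "add_subgroup (gen_subgroup S)"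
  unfolding gen_subgroup_def add_subgroup_def by auto

lemma gen_subgroup_superset: "S \<subseteq> gen_subgroup S"
  unfolding gen_subgroup_def by auto

lemma gen_subgroup_least: "add_subgroup H \<Longrightarrow> S \<subseteq> H \<Longrightarrow> gen_subgroup S \<subseteq> H"
  unfolding gen_subgroup_def by auto

lemma gen_subgroup_mono: "S \<subseteq> T \<Longrightarrow> gen_subgroup S \<subseteq> gen_subgroup T"
  by (meson gen_subgroup_superset gen_subgroup_least add_subgroup_gen_subgroup order_trans)

lemma add_subgroup_zero: "add_subgroup H \<Longrightarrow> 0 \<in> H"
  unfolding add_subgroup_def by auto

lemma add_subgroup_uminus: "add_subgroup H \<Longrightarrow> x \<in> H \<Longrightarrow> - x \<in> H"
  unfolding add_subgroup_def by (metis diff_0)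

lemma add_subgroup_add:
  fixes x :: "'a::group_add"
  shows "add_subgroup H \<Longrightarrow> x \<in> H \<Longrightarrow> y \<in> H \<Longrightarrow> x + y \<in> H"
  using add_subgroup_uminus[of H y] unfolding add_subgroup_def by (metis diff_minus_eq_add)

lemma add_subgroup_zmult:
  fixes a :: "'a::group_add"
  assumes "add_subgroup H" "a \<in> H"
  shows "zmult z a \<in> H"
proof -
  have "((plus a) ^^ n) 0 \<in> H" for n
    by (induction n) (auto intro: add_subgroup_add add_subgroup_zero assms)
  then show ?thesis
    unfolding zmult_def using add_subgroup_uminus[OF assms(1)] by auto
qed

lemma zmult_in_gen_subgroup: "a \<in> S \<Longrightarrow> zmult z a \<in> gen_subgroup S"
  using add_subgroup_zmult[OF add_subgroup_gen_subgroup] gen_subgroup_superset by blast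

lemma add_subgroup_sum:
  fixes f :: "'b \<Rightarrow> 'a::ab_group_add"
  assumes "add_subgroup H" "\<And>i. i \<in> I \<Longrightarrow> f i \<in> H"
  shows "sum f I \<in> H"
  using assms(2)
  by (induction I rule: infinite_finite_induct)
    (auto simp: add_subgroup_zero add_subgroup_add assms(1))

lemma abs_cauchy_summable_subset:
  assumes "abs_cauchy_summable A" "B \<subseteq> A"
  shows "abs_cauchy_summable B"
  unfolding abs_cauchy_summable_def
proof (intro allI impI)
  fix U :: "'a set" assume "nhd0 U"
  then obtain F where F: "finite F" "F \<subseteq> A" "gen_subgroup (A - F) \<subseteq> U"
    using assms(1) unfolding abs_cauchy_summable_def by blast
  have "gen_subgroup (B - F \<inter> B) \<subseteq> gen_subgroup (A - F)"
    using assms(2) by (intro gen_subgroup_mono) blast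
  then show "\<exists>F. finite F \<and> F \<subseteq> B \<and> gen_subgroup (B - F) \<subseteq> U"
    using F by (intro exI[of _ "F \<inter> B"]) auto
qed

definition no_diffs_in :: "'a::group_add set \<Rightarrow> 'a set \<Rightarrow> bool" where
  "no_diffs_in Q H \<longleftrightarrow> (\<forall>x\<in>Q. \<forall>y\<in>Q. x - y \<in> H \<longrightarrow> x = y)"

lemma open_diff_nhd0:
  fixes V :: "'a::topological_group_add set"
  assumes "open V" "0 \<in> V"
  obtains Q where "open Q" "0 \<in> Q" "\<And>x y. x \<in> Q \<Longrightarrow> y \<in> Q \<Longrightarrow> x - y \<in> V"
proof -
  let ?d = "\<lambda>p::'a \<times> 'a. fst p - snd p"
  have "open (?d -` V)"
    using assms(1) continuous_on_open_vimage[of UNIV ?d] by (auto intro!: continuous_intros)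
  moreover have "(0, 0) \<in> ?d -` V" using assms(2) by simp
  ultimately obtain S T where "open S" "open T" "(0, 0) \<in> S \<times> T" "S \<times> T \<subseteq> ?d -` V"
    by (rule open_prod_elim)
  then show ?thesis
    by (intro that[of "S \<inter> T"]) auto
qed

lemma discrete_subgroup_no_diffs_nhd0:
  fixes H :: "'a::topological_group_add set"
  assumes "add_subgroup H" "discrete_subspace H"
  obtains Q where "open Q" "0 \<in> Q" "no_diffs_in Q H"
proof -
  obtain V where V: "open V" "V \<inter> H = {0}"
    using assms unfolding discrete_subspace_def by (meson add_subgroup_zero)
  then obtain Q where "open Q" "0 \<in> Q" "\<And>x y. x \<in> Q \<Longrightarrow> y \<in> Q \<Longrightarrow> x - y \<in> V"
    using open_diff_nhd0[of V] by blast
  moreover have "x = y" if "x - y \<in> V \<inter> H" for x y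
    using V(2) that by simp
  ultimately show ?thesis
    by (intro that[of Q]) (auto simp: no_diffs_in_def)
qed

lemma infinite_sequence_avoiding:
  assumes "infinite S" "\<And>x. x \<in> S \<Longrightarrow> finite (F x)"
  obtains b :: "nat \<Rightarrow> 'a"
    where "\<And>n. b n \<in> S" "\<And>k n. k < n \<Longrightarrow> b n \<noteq> b k \<and> b n \<notin> F (b k)"
proof -
  let ?P = "\<lambda>b n r. r \<in> S \<and> (\<forall>k<n. r \<noteq> b k \<and> r \<notin> F (b k))"
  have "\<exists>b :: nat \<Rightarrow> 'a. \<forall>n. ?P b n (b n)"
  proof (rule dependent_wellorder_choice)
    fix n and b :: "nat \<Rightarrow> 'a"
    assume "\<And>k. k < n \<Longrightarrow> ?P b k (b k)"
    then have "finite (\<Union>k<n. insert (b k) (F (b k)))"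
      using assms(2) by auto
    then have "infinite (S - (\<Union>k<n. insert (b k) (F (b k))))"
      using assms(1) by (rule Diff_infinite_finite)
    then obtain r where "r \<in> S - (\<Union>k<n. insert (b k) (F (b k)))"
      using infinite_imp_nonempty by blast
    then show "\<exists>r. ?P b n r" by blast
  qed simp
  then show ?thesis using that by blast
qed

lemma leading_terms_vanish:
  fixes b :: "nat \<Rightarrow> 'a::ab_group_add"
  assumes I: "finite I"
    and t: "\<And>i. i \<in> I \<Longrightarrow> t i \<in> gen_subgroup {b i}"
    and sep: "\<And>k. k < m \<Longrightarrow> no_diffs_in (Q k) (gen_subgroup {b k})"
    and tail: "\<And>k. k < m \<Longrightarrow> gen_subgroup (b ` {k<..}) \<subseteq> Q k"
    and sum: "\<And>k. k < m \<Longrightarrow> sum t I \<in> Q k"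
  shows "k \<in> I \<Longrightarrow> k < m \<Longrightarrow> t k = 0"
proof (induction k rule: less_induct)
  case (less k)
  define I1 where "I1 = {i\<in>I. i < k}"
  define I2 where "I2 = {i\<in>I. k < i}"
  have "I = insert k (I1 \<union> I2)" using less.prems(1) by (auto simp: I1_def I2_def)
  then have "sum t I = t k + (sum t I1 + sum t I2)"
    using I unfolding I1_def I2_def
    by (metis (no_types, lifting) finite_Un finite_insert mem_Collect_eq Un_iff less_asym
        less_irrefl sum.insert sum.union_disjoint disjoint_iff)
  moreover have "sum t I1 = 0"
    using less by (auto simp: I1_def intro!: sum.neutral)
  ultimately have split: "sum t I = t k + sum t I2" by simp
  have "sum t I2 \<in> gen_subgroup (b ` {k<..})"
    using t gen_subgroup_mono[of "{b _}" "b ` {k<..}"]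
    by (intro add_subgroup_sum[OF add_subgroup_gen_subgroup]) (auto simp: I2_def)
  then have "sum t I2 \<in> Q k" using tail less.prems(2) by blast
  moreover have "sum t I \<in> Q k" using sum less.prems(2) .
  moreover have "sum t I - sum t I2 \<in> gen_subgroup {b k}"
    using split t less.prems(1) by simp
  ultimately have "sum t I = sum t I2"
    using sep less.prems(2) unfolding no_diffs_in_def by blast
  then show "t k = 0" using split by simp
qed

lemma top_independent_sequence:
  fixes b :: "nat \<Rightarrow> 'a::topological_ab_group_add"
  assumes inj: "inj b" and summable: "abs_cauchy_summable (range b)" and "0 \<notin> range b"
    and Q: "\<And>k. open (Q k)" "\<And>k. 0 \<in> Q k"
    and sep: "\<And>k. no_diffs_in (Q k) (gen_subgroup {b k})"
    and tail: "\<And>k. gen_subgroup (b ` {k<..}) \<subseteq> Q k"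
  shows "top_independent (range b)"
  unfolding top_independent_def
proof (intro conjI allI impI)
  show "0 \<notin> range b" by fact
  fix W :: "'a set" assume W: "nhd0 W"
  obtain FW where FW: "finite FW" "gen_subgroup (range b - FW) \<subseteq> W"
    using summable W unfolding abs_cauchy_summable_def by blast
  have "finite (b -` FW)" using FW(1) inj by (rule finite_vimageI)
  then obtain m where m: "b -` FW \<subseteq> {..<m}" by (auto simp: finite_nat_set_iff_bounded)
  define U where "U = (\<Inter>k<m. Q k)"
  have "open U" "0 \<in> U" unfolding U_def using Q by auto
  then have "nhd0 U" unfolding nhd0_def by blast
  moreover have "\<forall>a\<in>F. zmult (z a) a \<in> W"
    if F: "finite F" "F \<subseteq> range b" and "(\<Sum>a\<in>F. zmult (z a) a) \<in> U" for F z
  proof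
    fix a assume "a \<in> F"
    define I where "I = b -` F"
    define t where "t i = zmult (z (b i)) (b i)" for i
    have "finite I" unfolding I_def using F(1) inj by (rule finite_vimageI)
    have "F = b ` I" using F(2) unfolding I_def by auto
    then have "(\<Sum>a\<in>F. zmult (z a) a) = sum t I"
      unfolding t_def by (simp add: sum.reindex inj_on_subset[OF inj])
    then have sum: "k < m \<Longrightarrow> sum t I \<in> Q k" for k
      using \<open>(\<Sum>a\<in>F. zmult (z a) a) \<in> U\<close> by (auto simp: U_def)
    obtain i where i: "i \<in> I" "a = b i" using \<open>a \<in> F\<close> \<open>F = b ` I\<close> by auto
    show "zmult (z a) a \<in> W"
    proof (cases "i < m")
      case True
      then have "t i = 0"
        using leading_terms_vanish[OF \<open>finite I\<close> _ sep tail sum] i(1)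
        by (auto simp: t_def zmult_in_gen_subgroup)
      moreover have "0 \<in> W" using W unfolding nhd0_def by blast
      ultimately show ?thesis using i(2) by (simp add: t_def)
    next
      case False
      then have "a \<in> range b - FW" using m i(2) by auto
      then show ?thesis using FW(2) zmult_in_gen_subgroup[of a "range b - FW"] by blast
    qed
  qed
  ultimately show "\<exists>U. nhd0 U \<and> (\<forall>F z. finite F \<and> F \<subseteq> range b \<longrightarrow>
      (\<Sum>a\<in>F. zmult (z a) a) \<in> U \<longrightarrow> (\<forall>a\<in>F. zmult (z a) a \<in> W))"
    by auto
qed

theorem theorem5p4:
  fixes A :: "'a::{topological_ab_group_add, t2_space} set"
  assumes "infinite A"
    and "abs_cauchy_summable A"
    and "\<forall>a\<in>A. discrete_subspace (gen_subgroup {a})"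
  shows "\<exists>B\<subseteq>A. infinite B \<and> top_independent B"
proof -
  have "\<forall>a\<in>A - {0}. \<exists>Q. open Q \<and> 0 \<in> Q \<and> no_diffs_in Q (gen_subgroup {a})"
    using assms(3) discrete_subgroup_no_diffs_nhd0[OF add_subgroup_gen_subgroup] by blast
  then obtain Q where Q: "\<And>a. a \<in> A - {0} \<Longrightarrow>
      open (Q a) \<and> 0 \<in> Q a \<and> no_diffs_in (Q a) (gen_subgroup {a})"
    by metis
  then have "\<forall>a\<in>A - {0}. \<exists>F. finite F \<and> F \<subseteq> A \<and> gen_subgroup (A - F) \<subseteq> Q a"
    using assms(2) unfolding abs_cauchy_summable_def nhd0_def by blast
  then obtain F where F: "\<And>a. a \<in> A - {0} \<Longrightarrow>
      finite (F a) \<and> F a \<subseteq> A \<and> gen_subgroup (A - F a) \<subseteq> Q a"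
    by metis
  have "infinite (A - {0})" using assms(1) by simp
  then obtain b :: "nat \<Rightarrow> 'a" where b: "\<And>n. b n \<in> A - {0}"
      "\<And>k n. k < n \<Longrightarrow> b n \<noteq> b k \<and> b n \<notin> F (b k)"
    using infinite_sequence_avoiding[of "A - {0}" F] F by blast
  have "inj b" by (metis b(2) injI linorder_neq_iff)
  have "gen_subgroup (b ` {k<..}) \<subseteq> Q (b k)" for k
  proof -
    have "b ` {k<..} \<subseteq> A - F (b k)" using b by auto
    then have "gen_subgroup (b ` {k<..}) \<subseteq> gen_subgroup (A - F (b k))"
      by (rule gen_subgroup_mono)
    then show ?thesis using F b(1) by blast
  qed
  then have "top_independent (range b)"
    using \<open>inj b\<close> b(1) Q abs_cauchy_summable_subset[OF assms(2), of "range b"]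
    by (intro top_independent_sequence[where Q = "Q \<circ> b"]) auto
  moreover have "infinite (range b)" using \<open>inj b\<close> using finite_imageD infinite_UNIV_nat by blast
  ultimately show ?thesis using b(1) by blast
qed

end
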